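(* Let $\rho$ be a state on $\mathcal H_{AB}$ and let $\mathcal F$ be a convex set of states on $\mathcal H_{AB}$. Then for every $\epsilon>0$, $\gamma^{\epsilon}_{\mathcal F}(\rho)\ge 2^{D^{\epsilon}_{\max}(\rho\|\mathcal F)}$.
   Context: $\log$ base 2. $B_\epsilon(\rho)=\{\tau\text{ a state on }\mathcal H_{AB}: d(\tau,\rho)\le\epsilon\}$ with $d$ the trace-norm induced distance. The smoothed $\gamma$-factor is $\gamma^{\epsilon}_{\mathcal F}(\rho)=\inf\{c_1+c_2:\ \sigma=c_1\sigma_1-c_2\sigma_2,\ c_1,c_2\ge0,\ \sigma_1,\sigma_2\in\mathcal F,\ \sigma\in B_\epsilon(\rho)\}$. The smoothed max-relative entropy with respect to $\mathcal F$ is $D^{\epsilon}_{\max}(\rho\|\mathcal F)=\min_{\tau\in B_\epsilon(\rho)}\inf_{\sigma\in\mathcal F}\inf\{\lambda\in\mathbb R:\tau\le2^{\lambda}\sigma\}$. *)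

theory Defs
  imports "Jordan_Normal_Form.Schur_Decomposition" "HOL-Library.Extended_Real"
begin

text \<open>Finite-dimensional quantum states on H_AB, modelled as n x n complex matrices
  (n = dim H_AB).\<close>

definition psd :: "nat \<Rightarrow> complex mat \<Rightarrow> bool" where
  "psd n A \<longleftrightarrow> A \<in> carrier_mat n n \<and>
     (\<forall>v \<in> carrier_vec n. Im ((A *\<^sub>v v) \<bullet>c v) = 0 \<and> Re ((A *\<^sub>v v) \<bullet>c v) \<ge> 0)"

definition loewner_le :: "nat \<Rightarrow> complex mat \<Rightarrow> complex mat \<Rightarrow> bool" where
  "loewner_le n A B \<longleftrightarrow> A \<in> carrier_mat n n \<and> B \<in> carrier_mat n n \<and> psd n (B - A)"

definition mtrace :: "complex mat \<Rightarrow> complex" where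
  "mtrace A = (\<Sum>i<dim_row A. A $$ (i, i))"

definition is_state :: "nat \<Rightarrow> complex mat \<Rightarrow> bool" where
  "is_state n \<rho> \<longleftrightarrow> psd n \<rho> \<and> mtrace \<rho> = 1"

text \<open>Trace norm ||X||_1 = tr sqrt(X^* X) = sum of singular values (with multiplicity):
  the eigenvalues of X^* X are the roots of its characteristic polynomial.\<close>
definition trace_norm :: "complex mat \<Rightarrow> real" where
  "trace_norm X = (let B = mat_adjoint X * X in
     (\<Sum>k \<in> {k. poly (char_poly B) k = 0}. real (order k (char_poly B)) * sqrt (Re k)))"

definition tdist :: "complex mat \<Rightarrow> complex mat \<Rightarrow> real" where
  "tdist \<tau> \<rho> = trace_norm (\<tau> - \<rho>)"

definition eps_ball :: "nat \<Rightarrow> real \<Rightarrow> complex mat \<Rightarrow> complex mat set" where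
  "eps_ball n \<epsilon> \<rho> = {\<tau>. is_state n \<tau> \<and> tdist \<tau> \<rho> \<le> \<epsilon>}"

definition convex_mat_set :: "complex mat set \<Rightarrow> bool" where
  "convex_mat_set F \<longleftrightarrow> (\<forall>s1\<in>F. \<forall>s2\<in>F. \<forall>t::real. 0 \<le> t \<and> t \<le> 1 \<longrightarrow>
      complex_of_real t \<cdot>\<^sub>m s1 + complex_of_real (1 - t) \<cdot>\<^sub>m s2 \<in> F)"

text \<open>Smoothed gamma-factor (infimum in the extended reals; +\<infinity> for an empty set).\<close>
definition gamma_eps :: "nat \<Rightarrow> real \<Rightarrow> complex mat set \<Rightarrow> complex mat \<Rightarrow> ereal" where
  "gamma_eps n \<epsilon> F \<rho> = Inf {ereal (c1 + c2) | c1 c2 s1 s2.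
      0 \<le> c1 \<and> 0 \<le> c2 \<and> s1 \<in> F \<and> s2 \<in> F \<and>
      complex_of_real c1 \<cdot>\<^sub>m s1 - complex_of_real c2 \<cdot>\<^sub>m s2 \<in> eps_ball n \<epsilon> \<rho>}"

definition Dmax_eps :: "nat \<Rightarrow> real \<Rightarrow> complex mat \<Rightarrow> complex mat set \<Rightarrow> ereal" where
  "Dmax_eps n \<epsilon> \<rho> F = Inf ((\<lambda>\<tau>. Inf ((\<lambda>\<sigma>. Inf {ereal l | l. loewner_le n \<tau> (complex_of_real (2 powr l) \<cdot>\<^sub>m \<sigma>)}) ` F))
      ` eps_ball n \<epsilon> \<rho>)"

definition pow2_ereal :: "ereal \<Rightarrow> ereal" where
  "pow2_ereal x = (case x of ereal r \<Rightarrow> ereal (2 powr r) | PInfty \<Rightarrow> PInfty | MInfty \<Rightarrow> 0)"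

end

theory Submission
  imports Defs
begin

text \<open>If \<open>\<sigma> = c\<^sub>1 \<sigma>\<^sub>1 - c\<^sub>2 \<sigma>\<^sub>2\<close> is a state with \<open>\<sigma>\<^sub>1, \<sigma>\<^sub>2 \<in> F\<close>, taking traces gives
  \<open>c\<^sub>1 - c\<^sub>2 = 1\<close>, so \<open>c = c\<^sub>1 + c\<^sub>2 > 0\<close>. Dropping the negative part,
  \<open>\<sigma> \<le> c\<^sub>1 \<sigma>\<^sub>1 + c\<^sub>2 \<sigma>\<^sub>2 = c \<mu>\<close> where \<open>\<mu>\<close> is a convex combination of \<open>\<sigma>\<^sub>1, \<sigma>\<^sub>2\<close> and hence
  lies in \<open>F\<close>. Thus \<open>D\<^sup>\<epsilon>\<^sub>m\<^sub>a\<^sub>x(\<rho>\<parallel>F) \<le> log c\<close> for every admissible decomposition of every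
  \<open>\<sigma>\<close> in the \<open>\<epsilon>\<close>-ball, and taking the infimum over decompositions gives the claim.\<close>

lemma pow2_ereal_mono: "x \<le> y \<Longrightarrow> pow2_ereal x \<le> pow2_ereal y"
  by (cases x; cases y) (auto simp: pow2_ereal_def)

lemma smult_mat_mult_mat_vec:
  "A \<in> carrier_mat n n \<Longrightarrow> v \<in> carrier_vec n \<Longrightarrow> (k \<cdot>\<^sub>m A) *\<^sub>v v = k \<cdot>\<^sub>v (A *\<^sub>v v)"
  by (intro eq_vecI) (auto simp: scalar_prod_def sum_distrib_left ac_simps)

lemma psd_smult:
  assumes "psd n A" and "c \<ge> 0"
  shows "psd n (complex_of_real c \<cdot>\<^sub>m A)"
  unfolding psd_def
proof (intro conjI ballI)
  have A: "A \<in> carrier_mat n n" using assms(1) unfolding psd_def by simp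
  then show "complex_of_real c \<cdot>\<^sub>m A \<in> carrier_mat n n" by simp
  fix v :: "complex vec" assume v: "v \<in> carrier_vec n"
  have form: "((complex_of_real c \<cdot>\<^sub>m A) *\<^sub>v v) \<bullet>c v = complex_of_real c * ((A *\<^sub>v v) \<bullet>c v)"
    using A v by (simp add: smult_mat_mult_mat_vec)
  have "Im ((A *\<^sub>v v) \<bullet>c v) = 0" "Re ((A *\<^sub>v v) \<bullet>c v) \<ge> 0"
    using assms(1) v unfolding psd_def by auto
  then show "Im (((complex_of_real c \<cdot>\<^sub>m A) *\<^sub>v v) \<bullet>c v) = 0"
    and "Re (((complex_of_real c \<cdot>\<^sub>m A) *\<^sub>v v) \<bullet>c v) \<ge> 0"
    unfolding form using assms(2) by auto
qed

lemma mtrace_smult_diff: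
  assumes "A \<in> carrier_mat n n" and "B \<in> carrier_mat n n"
  shows "mtrace (a \<cdot>\<^sub>m A - b \<cdot>\<^sub>m B) = a * mtrace A - b * mtrace B"
  using assms unfolding mtrace_def by (simp add: sum_subtractf sum_distrib_left)

lemma state_diff_coeffs:
  assumes "is_state n (complex_of_real c\<^sub>1 \<cdot>\<^sub>m \<sigma>\<^sub>1 - complex_of_real c\<^sub>2 \<cdot>\<^sub>m \<sigma>\<^sub>2)"
    and "is_state n \<sigma>\<^sub>1" and "is_state n \<sigma>\<^sub>2"
  shows "c\<^sub>1 - c\<^sub>2 = 1"
proof -
  have "\<sigma>\<^sub>1 \<in> carrier_mat n n" "\<sigma>\<^sub>2 \<in> carrier_mat n n"
    using assms(2,3) unfolding is_state_def psd_def by auto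
  then have "complex_of_real (c\<^sub>1 - c\<^sub>2) = 1"
    using assms mtrace_smult_diff unfolding is_state_def by (metis mult.right_neutral of_real_diff)
  then show ?thesis by (metis of_real_eq_1_iff)
qed

lemma loewner_le_smult_diff_add:
  assumes "psd n A" and "psd n B" and "c\<^sub>1 \<ge> 0" and "c\<^sub>2 \<ge> 0"
  shows "loewner_le n (complex_of_real c\<^sub>1 \<cdot>\<^sub>m A - complex_of_real c\<^sub>2 \<cdot>\<^sub>m B)
                      (complex_of_real c\<^sub>1 \<cdot>\<^sub>m A + complex_of_real c\<^sub>2 \<cdot>\<^sub>m B)"
proof -
  have A: "A \<in> carrier_mat n n" and B: "B \<in> carrier_mat n n"
    using assms(1,2) unfolding psd_def by auto
  have "complex_of_real c\<^sub>1 \<cdot>\<^sub>m A + complex_of_real c\<^sub>2 \<cdot>\<^sub>m B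
        - (complex_of_real c\<^sub>1 \<cdot>\<^sub>m A - complex_of_real c\<^sub>2 \<cdot>\<^sub>m B)
      = complex_of_real (2 * c\<^sub>2) \<cdot>\<^sub>m B"
    using A B by (intro eq_matI) auto
  then show ?thesis
    unfolding loewner_le_def using A B psd_smult[OF assms(2), of "2 * c\<^sub>2"] assms(4) by auto
qed

lemma convex_mat_set_conic_comb:
  assumes "convex_mat_set F" and "\<sigma>\<^sub>1 \<in> F" and "\<sigma>\<^sub>2 \<in> F"
    and "\<sigma>\<^sub>1 \<in> carrier_mat n n" and "\<sigma>\<^sub>2 \<in> carrier_mat n n"
    and "c\<^sub>1 \<ge> 0" and "c\<^sub>2 \<ge> 0" and "c\<^sub>1 + c\<^sub>2 > 0"
  obtains \<mu> where "\<mu> \<in> F"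
    and "complex_of_real c\<^sub>1 \<cdot>\<^sub>m \<sigma>\<^sub>1 + complex_of_real c\<^sub>2 \<cdot>\<^sub>m \<sigma>\<^sub>2 = complex_of_real (c\<^sub>1 + c\<^sub>2) \<cdot>\<^sub>m \<mu>"
proof
  define c where "c = c\<^sub>1 + c\<^sub>2"
  define t where "t = c\<^sub>1 / c"
  have "0 \<le> t" and "t \<le> 1" using assms(6-8) unfolding t_def c_def by auto
  then show "complex_of_real t \<cdot>\<^sub>m \<sigma>\<^sub>1 + complex_of_real (1 - t) \<cdot>\<^sub>m \<sigma>\<^sub>2 \<in> F"
    using assms(1-3) unfolding convex_mat_set_def by blast
  have "c * t = c\<^sub>1" and "c * (1 - t) = c\<^sub>2"
    using assms(8) unfolding t_def c_def by (simp_all add: field_simps)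
  then have "complex_of_real c * complex_of_real t = complex_of_real c\<^sub>1"
    and "complex_of_real c * complex_of_real (1 - t) = complex_of_real c\<^sub>2"
    by (metis of_real_mult)+
  then show "complex_of_real c\<^sub>1 \<cdot>\<^sub>m \<sigma>\<^sub>1 + complex_of_real c\<^sub>2 \<cdot>\<^sub>m \<sigma>\<^sub>2 = complex_of_real (c\<^sub>1 + c\<^sub>2) \<cdot>\<^sub>m
      (complex_of_real t \<cdot>\<^sub>m \<sigma>\<^sub>1 + complex_of_real (1 - t) \<cdot>\<^sub>m \<sigma>\<^sub>2)"
    using assms(4,5) unfolding c_def[symmetric]
    by (intro eq_matI) (auto simp: distrib_left simp flip: mult.assoc)
qed

lemma Dmax_eps_le:
  assumes "\<tau> \<in> eps_ball n \<epsilon> \<rho>" and "\<sigma> \<in> F"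
    and "loewner_le n \<tau> (complex_of_real (2 powr l) \<cdot>\<^sub>m \<sigma>)"
  shows "Dmax_eps n \<epsilon> \<rho> F \<le> ereal l"
proof -
  have "Inf {ereal l' | l'. loewner_le n \<tau> (complex_of_real (2 powr l') \<cdot>\<^sub>m \<sigma>)} \<le> ereal l"
    using assms(3) by (auto intro: Inf_lower)
  then show ?thesis
    unfolding Dmax_eps_def using assms(1,2) by (meson INF_lower2)
qed

theorem lemma5:
  fixes n :: nat and \<rho> :: "complex mat" and F :: "complex mat set" and \<epsilon> :: real
  assumes "is_state n \<rho>"
    and "\<forall>\<sigma>\<in>F. is_state n \<sigma>"
    and "convex_mat_set F"
    and "\<epsilon> > 0"
  shows "gamma_eps n \<epsilon> F \<rho> \<ge> pow2_ereal (Dmax_eps n \<epsilon> \<rho> F)"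
  unfolding gamma_eps_def
proof (rule Inf_greatest, clarify)
  fix c\<^sub>1 c\<^sub>2 :: real and \<sigma>\<^sub>1 \<sigma>\<^sub>2
  assume c: "0 \<le> c\<^sub>1" "0 \<le> c\<^sub>2" and in_F: "\<sigma>\<^sub>1 \<in> F" "\<sigma>\<^sub>2 \<in> F"
    and ball: "complex_of_real c\<^sub>1 \<cdot>\<^sub>m \<sigma>\<^sub>1 - complex_of_real c\<^sub>2 \<cdot>\<^sub>m \<sigma>\<^sub>2 \<in> eps_ball n \<epsilon> \<rho>"
  have states: "is_state n \<sigma>\<^sub>1" "is_state n \<sigma>\<^sub>2" using assms(2) in_F by auto
  then have psd: "psd n \<sigma>\<^sub>1" "psd n \<sigma>\<^sub>2" unfolding is_state_def by auto
  have "c\<^sub>1 - c\<^sub>2 = 1"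
    using ball states state_diff_coeffs unfolding eps_ball_def by blast
  then have pos: "c\<^sub>1 + c\<^sub>2 > 0" using c by linarith
  obtain \<mu> where "\<mu> \<in> F"
    and comb: "complex_of_real c\<^sub>1 \<cdot>\<^sub>m \<sigma>\<^sub>1 + complex_of_real c\<^sub>2 \<cdot>\<^sub>m \<sigma>\<^sub>2 = complex_of_real (c\<^sub>1 + c\<^sub>2) \<cdot>\<^sub>m \<mu>"
    using convex_mat_set_conic_comb[OF assms(3) in_F _ _ c pos] psd unfolding psd_def by blast
  have "loewner_le n (complex_of_real c\<^sub>1 \<cdot>\<^sub>m \<sigma>\<^sub>1 - complex_of_real c\<^sub>2 \<cdot>\<^sub>m \<sigma>\<^sub>2)
          (complex_of_real (2 powr log 2 (c\<^sub>1 + c\<^sub>2)) \<cdot>\<^sub>m \<mu>)"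
    using loewner_le_smult_diff_add[OF psd c] pos by (simp add: comb)
  then have "Dmax_eps n \<epsilon> \<rho> F \<le> ereal (log 2 (c\<^sub>1 + c\<^sub>2))"
    using Dmax_eps_le ball \<open>\<mu> \<in> F\<close> by blast
  then have "pow2_ereal (Dmax_eps n \<epsilon> \<rho> F) \<le> pow2_ereal (ereal (log 2 (c\<^sub>1 + c\<^sub>2)))"
    by (rule pow2_ereal_mono)
  also have "\<dots> = ereal (c\<^sub>1 + c\<^sub>2)" using pos by (simp add: pow2_ereal_def)
  finally show "pow2_ereal (Dmax_eps n \<epsilon> \<rho> F) \<le> ereal (c\<^sub>1 + c\<^sub>2)" .
qed

end
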